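(* Let $c_1$ be a real constant and $f$ a smooth function of $\theta$ on an interval satisfying $$\sin\theta\Big[\big(3f'+c_1\big)f''-2ff'\Big]+\cos\theta\Big[ff''+4(f')^2+2c_1f'\Big]=0$$ (primes denote $d/d\theta$). In polar coordinates $x=r\cos\theta$, $y=r\sin\theta$ ($r>0$, $\theta$ in that interval), let $V=f'(\theta)/r^2$. Then $$J=p_\theta^2\Big(\cos\theta\,p_r-\sin\theta\,\frac{p_\theta}{r}\Big)+\Big[(2f'+c_1)\cos\theta-f\sin\theta\Big]p_r-\Big[(3f'+c_1)\sin\theta+f\cos\theta\Big]\frac{p_\theta}{r}$$ is a first integral of $\ddot x=-V_{,x}$, $\ddot y=-V_{,y}$, where $p_r=\dot r$ and $p_\theta=r^2\dot\theta$.
   Context: A first integral is a function of $(t,x,y,\dot x,\dot y)$ whose total time derivative vanishes along every solution of the given equations of motion. *)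

theory Defs
  imports "HOL-Analysis.Analysis"
begin

definition smooth_on_real :: "(real \<Rightarrow> real) \<Rightarrow> real set \<Rightarrow> bool" where
  "smooth_on_real f S \<longleftrightarrow> (\<forall>n. \<forall>x\<in>S. ((deriv ^^ n) f) differentiable (at x))"

definition J_polar :: "(real \<Rightarrow> real) \<Rightarrow> real \<Rightarrow> real \<Rightarrow> real \<Rightarrow> real \<Rightarrow> real \<Rightarrow> real" where
  "J_polar f c1 r \<theta> pr p\<theta> =
     p\<theta>^2 * (cos \<theta> * pr - sin \<theta> * p\<theta> / r)
     + ((2 * deriv f \<theta> + c1) * cos \<theta> - f \<theta> * sin \<theta>) * pr
     - ((3 * deriv f \<theta> + c1) * sin \<theta> + f \<theta> * cos \<theta>) * p\<theta> / r"

end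

theory Submission
  imports Defs
begin

text \<open>In polar coordinates the motion obeys Hamilton's equations for
  \<open>H = (p\<^sub>r\<^sup>2 + p\<^sub>\<theta>\<^sup>2 / r\<^sup>2) / 2 + f'(\<theta>) / r\<^sup>2\<close>:
  \<open>r' = p\<^sub>r\<close>, \<open>\<theta>' = p\<^sub>\<theta> / r\<^sup>2\<close>, \<open>p\<^sub>r' = (p\<^sub>\<theta>\<^sup>2 + 2 f') / r\<^sup>3\<close>,
  \<open>p\<^sub>\<theta>' = - f'' / r\<^sup>2\<close>. Differentiating \<open>J\<close> along this flow, the terms of degree one
  and two in the momenta cancel and what is left is the left-hand side of the ODE divided by
  \<open>r\<^sup>3\<close>. Since \<open>V\<close> is only prescribed through its polar form, its Cartesian partial
  derivatives are computed by writing it near each point as \<open>f'(\<alpha>) / (u\<^sup>2 + v\<^sup>2)\<close> with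
  \<open>\<alpha>\<close> a smooth local branch of the polar angle.\<close>

text \<open>A branch of the polar angle on the half-plane \<open>u cos \<phi> + v sin \<phi> > 0\<close>,
  equal to \<open>\<phi>\<close> on the ray of direction \<open>\<phi>\<close>.\<close>
definition polar_angle_near :: "real \<Rightarrow> real \<Rightarrow> real \<Rightarrow> real" where
  "polar_angle_near \<phi> u v = \<phi> + arctan ((v * cos \<phi> - u * sin \<phi>) / (u * cos \<phi> + v * sin \<phi>))"

lemma polar_angle_near:
  assumes "u * cos \<phi> + v * sin \<phi> > 0"
  shows "sqrt (u\<^sup>2 + v\<^sup>2) * cos (polar_angle_near \<phi> u v) = u"
    and "sqrt (u\<^sup>2 + v\<^sup>2) * sin (polar_angle_near \<phi> u v) = v"
proof -
  define a where "a = u * cos \<phi> + v * sin \<phi>"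
  define b where "b = v * cos \<phi> - u * sin \<phi>"
  define \<rho> where "\<rho> = sqrt (u\<^sup>2 + v\<^sup>2)"
  have "a\<^sup>2 + b\<^sup>2 = (u\<^sup>2 + v\<^sup>2) * ((sin \<phi>)\<^sup>2 + (cos \<phi>)\<^sup>2)"
    unfolding a_def b_def by algebra
  then have ab: "a\<^sup>2 + b\<^sup>2 = \<rho>\<^sup>2"
    by (simp add: \<rho>_def)
  have "a > 0" using assms by (simp add: a_def)
  then have "\<rho>\<^sup>2 > 0"
    using ab by (metis add_pos_nonneg zero_le_power2 zero_less_power2 less_irrefl)
  then have "\<rho> > 0"
    by (simp add: \<rho>_def)
  have "sqrt (1 + (b / a)\<^sup>2) = \<rho> / a"
    using ab \<open>a > 0\<close> \<open>\<rho> > 0\<close> by (intro real_sqrt_unique) (auto simp: power_divide field_simps)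
  then have cos: "cos (arctan (b / a)) = a / \<rho>" and sin: "sin (arctan (b / a)) = b / \<rho>"
    using \<open>a > 0\<close> by (simp_all add: cos_arctan sin_arctan)
  have "\<rho> * cos (polar_angle_near \<phi> u v) = cos \<phi> * a - sin \<phi> * b"
    using \<open>\<rho> > 0\<close> unfolding polar_angle_near_def a_def[symmetric] b_def[symmetric] cos_add cos sin
    by (simp add: field_simps)
  also have "\<dots> = u * ((sin \<phi>)\<^sup>2 + (cos \<phi>)\<^sup>2)"
    unfolding a_def b_def by algebra
  finally show "sqrt (u\<^sup>2 + v\<^sup>2) * cos (polar_angle_near \<phi> u v) = u"
    by (simp add: \<rho>_def)
  have "\<rho> * sin (polar_angle_near \<phi> u v) = sin \<phi> * a + cos \<phi> * b"
    using \<open>\<rho> > 0\<close> unfolding polar_angle_near_def a_def[symmetric] b_def[symmetric] sin_add cos sin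
    by (simp add: field_simps)
  also have "\<dots> = v * ((sin \<phi>)\<^sup>2 + (cos \<phi>)\<^sup>2)"
    unfolding a_def b_def by algebra
  finally show "sqrt (u\<^sup>2 + v\<^sup>2) * sin (polar_angle_near \<phi> u v) = v"
    by (simp add: \<rho>_def)
qed

lemma eventually_nhds_isCont_in_open:
  assumes "isCont h x" "open S" "h x \<in> S"
  shows "eventually (\<lambda>y. h y \<in> S) (nhds x)"
  using assms by (metis isCont_def tendsto_at_iff_tendsto_nhds topological_tendstoD)

lemma polar_potential_directional_derivative:
  fixes V :: "real \<Rightarrow> real \<Rightarrow> real" and g :: "real \<Rightarrow> real"
  assumes V_polar: "\<forall>\<rho>>0. \<forall>\<phi>\<in>I. V (\<rho> * cos \<phi>) (\<rho> * sin \<phi>) = g \<phi> / \<rho>\<^sup>2"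
    and "open I" "\<phi> \<in> I" "\<rho> > 0" and g': "(g has_real_derivative g') (at \<phi>)"
  shows "((\<lambda>s. V (\<rho> * cos \<phi> + s * a) (\<rho> * sin \<phi> + s * b)) has_real_derivative
           (g' * (b * cos \<phi> - a * sin \<phi>) - 2 * g \<phi> * (a * cos \<phi> + b * sin \<phi>)) / \<rho> ^ 3) (at 0)"
proof -
  define u where "u s = \<rho> * cos \<phi> + s * a" for s
  define v where "v s = \<rho> * sin \<phi> + s * b" for s
  define h where "h s = polar_angle_near \<phi> (u s) (v s)" for s
  have radial0: "u 0 * cos \<phi> + v 0 * sin \<phi> = \<rho>"
    by (simp add: u_def v_def algebra_simps flip: distrib_left power2_eq_square)
  have h0: "h 0 = \<phi>"
    by (simp add: h_def polar_angle_near_def u_def v_def algebra_simps)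
  have h': "(h has_real_derivative (b * cos \<phi> - a * sin \<phi>) / \<rho>) (at 0)"
    unfolding h_def polar_angle_near_def u_def v_def
    by (rule derivative_eq_intros refl | use radial0 \<open>\<rho> > 0\<close> in \<open>simp add: u_def v_def\<close>)+
  have "eventually (\<lambda>s. u s * cos \<phi> + v s * sin \<phi> \<in> {0<..}) (nhds 0)"
    using radial0 \<open>\<rho> > 0\<close> by (intro eventually_nhds_isCont_in_open) (auto simp: u_def v_def)
  moreover have "eventually (\<lambda>s. h s \<in> I) (nhds 0)"
    using h' h0 assms(2,3) by (intro eventually_nhds_isCont_in_open) (auto dest: DERIV_isCont)
  ultimately have "eventually (\<lambda>s. V (u s) (v s) = g (h s) / ((u s)\<^sup>2 + (v s)\<^sup>2)) (nhds 0)"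
  proof eventually_elim
    case (elim s)
    then have "(u s)\<^sup>2 + (v s)\<^sup>2 > 0"
      by (auto simp: sum_power2_gt_zero_iff)
    with V_polar elim polar_angle_near[of "u s" \<phi> "v s"] show ?case
      by (metis greaterThan_iff h_def real_sqrt_gt_zero real_sqrt_pow2 less_imp_le)
  qed
  moreover have "((\<lambda>s. g (h s) / ((u s)\<^sup>2 + (v s)\<^sup>2)) has_real_derivative
           (g' * (b * cos \<phi> - a * sin \<phi>) - 2 * g \<phi> * (a * cos \<phi> + b * sin \<phi>)) / \<rho> ^ 3) (at 0)"
  proof -
    have u': "(u has_real_derivative a) (at 0)" and v': "(v has_real_derivative b) (at 0)"
      unfolding u_def v_def by (auto intro!: derivative_eq_intros)
    have uv0: "u 0 = \<rho> * cos \<phi>" "v 0 = \<rho> * sin \<phi>"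
      by (simp_all add: u_def v_def)
    then have norm0: "(u 0)\<^sup>2 + (v 0)\<^sup>2 = \<rho>\<^sup>2"
      by (simp add: power_mult_distrib flip: distrib_left)
    have "((\<lambda>s. g (h s)) has_real_derivative g' * ((b * cos \<phi> - a * sin \<phi>) / \<rho>)) (at 0)"
      using DERIV_chain2[OF g'[folded h0] h'] by simp
    moreover have "((\<lambda>s. (u s)\<^sup>2 + (v s)\<^sup>2) has_real_derivative 2 * \<rho> * (a * cos \<phi> + b * sin \<phi>)) (at 0)"
      by (rule derivative_eq_intros u' v' refl)+ (simp add: uv0 algebra_simps)
    ultimately have "((\<lambda>s. g (h s) / ((u s)\<^sup>2 + (v s)\<^sup>2)) has_real_derivative
        (g' * ((b * cos \<phi> - a * sin \<phi>) / \<rho>) * ((u 0)\<^sup>2 + (v 0)\<^sup>2)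
          - g (h 0) * (2 * \<rho> * (a * cos \<phi> + b * sin \<phi>)))
        / (((u 0)\<^sup>2 + (v 0)\<^sup>2) * ((u 0)\<^sup>2 + (v 0)\<^sup>2))) (at 0)"
      using \<open>\<rho> > 0\<close> by (intro DERIV_divide) (auto simp: norm0)
    then show ?thesis
      unfolding norm0 h0
      by (rule DERIV_cong) (use \<open>\<rho> > 0\<close> in \<open>simp add: field_simps power2_eq_square power3_eq_cube\<close>)
  qed
  ultimately show ?thesis
    unfolding u_def v_def by (simp add: DERIV_cong_ev)
qed

lemma polar_potential_partial_derivatives:
  fixes V :: "real \<Rightarrow> real \<Rightarrow> real" and g :: "real \<Rightarrow> real"
  assumes "\<forall>\<rho>>0. \<forall>\<phi>\<in>I. V (\<rho> * cos \<phi>) (\<rho> * sin \<phi>) = g \<phi> / \<rho>\<^sup>2"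
    and "open I" "\<phi> \<in> I" "\<rho> > 0" "(g has_real_derivative g') (at \<phi>)"
  shows "deriv (\<lambda>u. V u (\<rho> * sin \<phi>)) (\<rho> * cos \<phi>) = - (g' * sin \<phi> + 2 * g \<phi> * cos \<phi>) / \<rho> ^ 3"
    and "deriv (\<lambda>v. V (\<rho> * cos \<phi>) v) (\<rho> * sin \<phi>) = (g' * cos \<phi> - 2 * g \<phi> * sin \<phi>) / \<rho> ^ 3"
proof -
  have "((\<lambda>u. V u (\<rho> * sin \<phi>)) has_real_derivative - (g' * sin \<phi> + 2 * g \<phi> * cos \<phi>) / \<rho> ^ 3)
          (at (\<rho> * cos \<phi>))"
    using polar_potential_directional_derivative[OF assms, of 1 0]
      DERIV_shift[of "\<lambda>u. V u (\<rho> * sin \<phi>)" _ 0 "\<rho> * cos \<phi>"]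
    by (simp add: add.commute)
  then show "deriv (\<lambda>u. V u (\<rho> * sin \<phi>)) (\<rho> * cos \<phi>) = - (g' * sin \<phi> + 2 * g \<phi> * cos \<phi>) / \<rho> ^ 3"
    by (simp add: DERIV_imp_deriv)
  have "((\<lambda>v. V (\<rho> * cos \<phi>) v) has_real_derivative (g' * cos \<phi> - 2 * g \<phi> * sin \<phi>) / \<rho> ^ 3)
          (at (\<rho> * sin \<phi>))"
    using polar_potential_directional_derivative[OF assms, of 0 1]
      DERIV_shift[of "V (\<rho> * cos \<phi>)" _ 0 "\<rho> * sin \<phi>"]
    by (simp add: add.commute)
  then show "deriv (\<lambda>v. V (\<rho> * cos \<phi>) v) (\<rho> * sin \<phi>) = (g' * cos \<phi> - 2 * g \<phi> * sin \<phi>) / \<rho> ^ 3"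
    by (simp add: DERIV_imp_deriv)
qed

lemma polar_potential_force_components:
  fixes V :: "real \<Rightarrow> real \<Rightarrow> real" and g :: "real \<Rightarrow> real"
  assumes "\<forall>\<rho>>0. \<forall>\<phi>\<in>I. V (\<rho> * cos \<phi>) (\<rho> * sin \<phi>) = g \<phi> / \<rho>\<^sup>2"
    and "open I" "\<phi> \<in> I" "\<rho> > 0" "(g has_real_derivative g') (at \<phi>)"
  defines "V\<^sub>x \<equiv> deriv (\<lambda>u. V u (\<rho> * sin \<phi>)) (\<rho> * cos \<phi>)"
    and "V\<^sub>y \<equiv> deriv (\<lambda>v. V (\<rho> * cos \<phi>) v) (\<rho> * sin \<phi>)"
  shows "V\<^sub>x * cos \<phi> + V\<^sub>y * sin \<phi> = - 2 * g \<phi> / \<rho> ^ 3"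
    and "V\<^sub>y * cos \<phi> - V\<^sub>x * sin \<phi> = g' / \<rho> ^ 3"
proof -
  note partials = polar_potential_partial_derivatives[OF assms(1-5), folded V\<^sub>x_def V\<^sub>y_def]
  have "V\<^sub>x * cos \<phi> + V\<^sub>y * sin \<phi> = - 2 * g \<phi> * ((sin \<phi>)\<^sup>2 + (cos \<phi>)\<^sup>2) / \<rho> ^ 3"
    unfolding partials using \<open>\<rho> > 0\<close>
    by (simp add: field_simps power2_eq_square
        del: sin_cos_squared_add sin_cos_squared_add2 sin_cos_squared_add3)
  then show "V\<^sub>x * cos \<phi> + V\<^sub>y * sin \<phi> = - 2 * g \<phi> / \<rho> ^ 3"
    by simp
  have "V\<^sub>y * cos \<phi> - V\<^sub>x * sin \<phi> = g' * ((sin \<phi>)\<^sup>2 + (cos \<phi>)\<^sup>2) / \<rho> ^ 3"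
    unfolding partials using \<open>\<rho> > 0\<close>
    by (simp add: field_simps power2_eq_square
        del: sin_cos_squared_add sin_cos_squared_add2 sin_cos_squared_add3)
  then show "V\<^sub>y * cos \<phi> - V\<^sub>x * sin \<phi> = g' / \<rho> ^ 3"
    by simp
qed

lemma smooth_on_real_has_derivative:
  assumes "smooth_on_real f S" "x \<in> S"
  shows "((deriv ^^ n) f has_real_derivative (deriv ^^ Suc n) f x) (at x)"
  using assms by (simp add: smooth_on_real_def DERIV_deriv_iff_real_differentiable)

lemma polar_velocity:
  fixes x y r \<theta> :: "real \<Rightarrow> real"
  assumes "open T" "t \<in> T"
    and polar: "\<forall>s\<in>T. x s = r s * cos (\<theta> s) \<and> y s = r s * sin (\<theta> s)"
    and x': "(x has_real_derivative xd) (at t)" and y': "(y has_real_derivative yd) (at t)"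
    and r': "(r has_real_derivative rd) (at t)" and \<theta>': "(\<theta> has_real_derivative w) (at t)"
  shows "xd = rd * cos (\<theta> t) - r t * sin (\<theta> t) * w"
    and "yd = rd * sin (\<theta> t) + r t * cos (\<theta> t) * w"
proof -
  have "((\<lambda>s. r s * cos (\<theta> s)) has_real_derivative xd) (at t)"
    using x' assms(1,2) by (rule has_field_derivative_transform_within_open) (use polar in blast)
  moreover have "((\<lambda>s. r s * cos (\<theta> s)) has_real_derivative rd * cos (\<theta> t) - r t * sin (\<theta> t) * w) (at t)"
    by (rule derivative_eq_intros r' \<theta>' refl)+ simp
  ultimately show "xd = rd * cos (\<theta> t) - r t * sin (\<theta> t) * w"
    by (rule DERIV_unique)
  have "((\<lambda>s. r s * sin (\<theta> s)) has_real_derivative yd) (at t)"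
    using y' assms(1,2) by (rule has_field_derivative_transform_within_open) (use polar in blast)
  moreover have "((\<lambda>s. r s * sin (\<theta> s)) has_real_derivative rd * sin (\<theta> t) + r t * cos (\<theta> t) * w) (at t)"
    by (rule derivative_eq_intros r' \<theta>' refl)+ simp
  ultimately show "yd = rd * sin (\<theta> t) + r t * cos (\<theta> t) * w"
    by (rule DERIV_unique)
qed

lemma polar_momenta_has_derivative:
  fixes xd yd r \<theta> :: "real \<Rightarrow> real"
  assumes xd': "(xd has_real_derivative xdd) (at t)" and yd': "(yd has_real_derivative ydd) (at t)"
    and r': "(r has_real_derivative rd) (at t)" and \<theta>': "(\<theta> has_real_derivative w) (at t)"
    and xd: "xd t = rd * cos (\<theta> t) - r t * sin (\<theta> t) * w"
    and yd: "yd t = rd * sin (\<theta> t) + r t * cos (\<theta> t) * w"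
  shows "((\<lambda>s. xd s * cos (\<theta> s) + yd s * sin (\<theta> s)) has_real_derivative
           xdd * cos (\<theta> t) + ydd * sin (\<theta> t) + r t * w\<^sup>2) (at t)"
    and "((\<lambda>s. r s * (yd s * cos (\<theta> s) - xd s * sin (\<theta> s))) has_real_derivative
           r t * (ydd * cos (\<theta> t) - xdd * sin (\<theta> t))) (at t)"
proof -
  have "((\<lambda>s. xd s * cos (\<theta> s) + yd s * sin (\<theta> s)) has_real_derivative
           xdd * cos (\<theta> t) + ydd * sin (\<theta> t) + r t * w\<^sup>2 * ((sin (\<theta> t))\<^sup>2 + (cos (\<theta> t))\<^sup>2)) (at t)"
    by (rule derivative_eq_intros xd' yd' \<theta>' refl)+
      (simp add: xd yd algebra_simps power2_eq_square
        del: sin_cos_squared_add sin_cos_squared_add2 sin_cos_squared_add3)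
  then show "((\<lambda>s. xd s * cos (\<theta> s) + yd s * sin (\<theta> s)) has_real_derivative
           xdd * cos (\<theta> t) + ydd * sin (\<theta> t) + r t * w\<^sup>2) (at t)"
    by simp
  show "((\<lambda>s. r s * (yd s * cos (\<theta> s) - xd s * sin (\<theta> s))) has_real_derivative
           r t * (ydd * cos (\<theta> t) - xdd * sin (\<theta> t))) (at t)"
    by (rule derivative_eq_intros xd' yd' r' \<theta>' refl)+ (simp add: xd yd algebra_simps)
qed

lemma polar_momenta_eq:
  fixes xd yd rd \<rho> w \<phi> :: real
  assumes "xd = rd * cos \<phi> - \<rho> * sin \<phi> * w" "yd = rd * sin \<phi> + \<rho> * cos \<phi> * w"
  shows "xd * cos \<phi> + yd * sin \<phi> = rd" and "\<rho> * (yd * cos \<phi> - xd * sin \<phi>) = \<rho>\<^sup>2 * w"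
proof -
  have "xd * cos \<phi> + yd * sin \<phi> = rd * ((sin \<phi>)\<^sup>2 + (cos \<phi>)\<^sup>2)"
    unfolding assms by algebra
  then show "xd * cos \<phi> + yd * sin \<phi> = rd"
    by simp
  have "\<rho> * (yd * cos \<phi> - xd * sin \<phi>) = \<rho>\<^sup>2 * w * ((sin \<phi>)\<^sup>2 + (cos \<phi>)\<^sup>2)"
    unfolding assms by algebra
  then show "\<rho> * (yd * cos \<phi> - xd * sin \<phi>) = \<rho>\<^sup>2 * w"
    by simp
qed

lemma polar_hamilton_equations:
  fixes V :: "real \<Rightarrow> real \<Rightarrow> real" and g xd yd r \<theta> :: "real \<Rightarrow> real"
  assumes V_polar: "\<forall>\<rho>>0. \<forall>\<phi>\<in>I. V (\<rho> * cos \<phi>) (\<rho> * sin \<phi>) = g \<phi> / \<rho>\<^sup>2"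
    and "open I" "\<theta> t \<in> I" "r t > 0" and g': "(g has_real_derivative g') (at (\<theta> t))"
    and xd': "(xd has_real_derivative xdd) (at t)" and yd': "(yd has_real_derivative ydd) (at t)"
    and r': "(r has_real_derivative rd) (at t)" and \<theta>': "(\<theta> has_real_derivative w) (at t)"
    and vel: "xd t = rd * cos (\<theta> t) - r t * sin (\<theta> t) * w"
      "yd t = rd * sin (\<theta> t) + r t * cos (\<theta> t) * w"
    and newton: "xdd = - deriv (\<lambda>u. V u (r t * sin (\<theta> t))) (r t * cos (\<theta> t))"
      "ydd = - deriv (\<lambda>v. V (r t * cos (\<theta> t)) v) (r t * sin (\<theta> t))"
  shows "((\<lambda>s. xd s * cos (\<theta> s) + yd s * sin (\<theta> s)) has_real_derivative
           ((r t)\<^sup>2 * w)\<^sup>2 / r t ^ 3 + 2 * g (\<theta> t) / r t ^ 3) (at t)"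
    and "((\<lambda>s. r s * (yd s * cos (\<theta> s) - xd s * sin (\<theta> s))) has_real_derivative
           - g' / (r t)\<^sup>2) (at t)"
proof -
  note forces = polar_potential_force_components[OF V_polar \<open>open I\<close> \<open>\<theta> t \<in> I\<close> \<open>r t > 0\<close> g']
  have radial: "xdd * cos (\<theta> t) + ydd * sin (\<theta> t) = 2 * g (\<theta> t) / r t ^ 3"
    and angular: "ydd * cos (\<theta> t) - xdd * sin (\<theta> t) = - g' / r t ^ 3"
    using forces unfolding newton by linarith+
  show "((\<lambda>s. xd s * cos (\<theta> s) + yd s * sin (\<theta> s)) has_real_derivative
           ((r t)\<^sup>2 * w)\<^sup>2 / r t ^ 3 + 2 * g (\<theta> t) / r t ^ 3) (at t)"
    using polar_momenta_has_derivative(1)[OF xd' yd' r' \<theta>' vel]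
    by (rule DERIV_cong) (use \<open>r t > 0\<close> in \<open>simp add: radial power2_eq_square power3_eq_cube\<close>)
  show "((\<lambda>s. r s * (yd s * cos (\<theta> s) - xd s * sin (\<theta> s))) has_real_derivative
           - g' / (r t)\<^sup>2) (at t)"
    using polar_momenta_has_derivative(2)[OF xd' yd' r' \<theta>' vel]
    by (rule DERIV_cong) (use \<open>r t > 0\<close> in \<open>simp add: angular power2_eq_square power3_eq_cube\<close>)
qed

definition J_ode_residual :: "(real \<Rightarrow> real) \<Rightarrow> real \<Rightarrow> real \<Rightarrow> real" where
  "J_ode_residual f c1 \<theta> =
     sin \<theta> * ((3 * deriv f \<theta> + c1) * deriv (deriv f) \<theta> - 2 * f \<theta> * deriv f \<theta>)
   + cos \<theta> * (f \<theta> * deriv (deriv f) \<theta> + 4 * (deriv f \<theta>)\<^sup>2 + 2 * c1 * deriv f \<theta>)"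

lemma J_polar_has_derivative:
  fixes f r \<theta> pr p\<theta> :: "real \<Rightarrow> real"
  assumes f': "(f has_real_derivative deriv f (\<theta> t)) (at (\<theta> t))"
    and f'': "(deriv f has_real_derivative deriv (deriv f) (\<theta> t)) (at (\<theta> t))"
    and r': "(r has_real_derivative pr t) (at t)"
    and \<theta>': "(\<theta> has_real_derivative p\<theta> t / (r t)\<^sup>2) (at t)"
    and pr': "(pr has_real_derivative (p\<theta> t)\<^sup>2 / r t ^ 3 + 2 * deriv f (\<theta> t) / r t ^ 3) (at t)"
    and p\<theta>': "(p\<theta> has_real_derivative - deriv (deriv f) (\<theta> t) / (r t)\<^sup>2) (at t)"
    and "r t > 0"
  shows "((\<lambda>s. J_polar f c1 (r s) (\<theta> s) (pr s) (p\<theta> s)) has_real_derivative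
           J_ode_residual f c1 (\<theta> t) / r t ^ 3) (at t)"
proof -
  \<comment> \<open>Abbreviating the atoms keeps the final normalisation small enough to be fast.\<close>
  define R S C F0 F1 F2 P Q where atoms: "R = r t" "S = sin (\<theta> t)" "C = cos (\<theta> t)"
    "F0 = f (\<theta> t)" "F1 = deriv f (\<theta> t)" "F2 = deriv (deriv f) (\<theta> t)" "P = pr t" "Q = p\<theta> t"
  have "r t \<noteq> 0"
    using \<open>r t > 0\<close> by simp
  then have "R \<noteq> 0"
    by (simp add: atoms)
  show ?thesis
    unfolding J_polar_def J_ode_residual_def
    by (rule derivative_eq_intros refl r' \<theta>' pr' p\<theta>' DERIV_chain2[OF f' \<theta>'] DERIV_chain2[OF f'' \<theta>']
          \<open>r t \<noteq> 0\<close>)+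
      (unfold atoms[symmetric], use \<open>R \<noteq> 0\<close> in \<open>simp add: field_simps power2_eq_square power3_eq_cube\<close>)
qed

theorem mainTheorem14:
  fixes c1 :: real and f :: "real \<Rightarrow> real" and I :: "real set"
    and V :: "real \<Rightarrow> real \<Rightarrow> real"
    and T :: "real set"
    and x y xd yd xdd ydd r \<theta> rd \<theta>d :: "real \<Rightarrow> real"
  assumes I_interval: "is_interval I" and I_open: "open I"
    and f_smooth: "smooth_on_real f I"
    and f_ode: "\<forall>\<theta>\<in>I.
        sin \<theta> * ((3 * deriv f \<theta> + c1) * deriv (deriv f) \<theta> - 2 * f \<theta> * deriv f \<theta>)
      + cos \<theta> * (f \<theta> * deriv (deriv f) \<theta> + 4 * (deriv f \<theta>)^2 + 2 * c1 * deriv f \<theta>) = 0"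
    and V_def: "\<forall>\<rho>>0. \<forall>\<phi>\<in>I. V (\<rho> * cos \<phi>) (\<rho> * sin \<phi>) = deriv f \<phi> / \<rho>^2"
    and T_open: "open T"
    and x_deriv: "\<forall>t\<in>T. (x has_real_derivative xd t) (at t)"
    and y_deriv: "\<forall>t\<in>T. (y has_real_derivative yd t) (at t)"
    and xd_deriv: "\<forall>t\<in>T. (xd has_real_derivative xdd t) (at t)"
    and yd_deriv: "\<forall>t\<in>T. (yd has_real_derivative ydd t) (at t)"
    and eq_x: "\<forall>t\<in>T. xdd t = - deriv (\<lambda>u. V u (y t)) (x t)"
    and eq_y: "\<forall>t\<in>T. ydd t = - deriv (\<lambda>v. V (x t) v) (y t)"
    and r_deriv: "\<forall>t\<in>T. (r has_real_derivative rd t) (at t)"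
    and \<theta>_deriv: "\<forall>t\<in>T. (\<theta> has_real_derivative \<theta>d t) (at t)"
    and r_pos: "\<forall>t\<in>T. r t > 0"
    and \<theta>_in: "\<forall>t\<in>T. \<theta> t \<in> I"
    and polar: "\<forall>t\<in>T. x t = r t * cos (\<theta> t) \<and> y t = r t * sin (\<theta> t)"
  shows "\<forall>t\<in>T. ((\<lambda>s. J_polar f c1 (r s) (\<theta> s) (rd s) ((r s)^2 * \<theta>d s))
                 has_real_derivative 0) (at t)"
proof
  \<comment> \<open>Openness of \<open>I\<close> suffices.\<close>
  fix t assume t: "t \<in> T"
  define pr where "pr = (\<lambda>s. xd s * cos (\<theta> s) + yd s * sin (\<theta> s))"
  define p\<theta> where "p\<theta> = (\<lambda>s. r s * (yd s * cos (\<theta> s) - xd s * sin (\<theta> s)))"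
  have vel: "xd s = rd s * cos (\<theta> s) - r s * sin (\<theta> s) * \<theta>d s"
    "yd s = rd s * sin (\<theta> s) + r s * cos (\<theta> s) * \<theta>d s" if "s \<in> T" for s
    using polar_velocity[OF T_open that polar] x_deriv y_deriv r_deriv \<theta>_deriv that by blast+
  have momenta: "pr s = rd s" "p\<theta> s = (r s)\<^sup>2 * \<theta>d s" if "s \<in> T" for s
    using polar_momenta_eq[OF vel[OF that]] by (simp_all add: pr_def p\<theta>_def)
  have r_pos_t: "r t > 0" and \<theta>_in_t: "\<theta> t \<in> I"
    using r_pos \<theta>_in t by auto
  have f': "(f has_real_derivative deriv f (\<theta> t)) (at (\<theta> t))"
    and f'': "(deriv f has_real_derivative deriv (deriv f) (\<theta> t)) (at (\<theta> t))"
    using smooth_on_real_has_derivative[OF f_smooth \<theta>_in_t, of 0]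
      smooth_on_real_has_derivative[OF f_smooth \<theta>_in_t, of 1] by simp_all
  have newton: "xdd t = - deriv (\<lambda>u. V u (r t * sin (\<theta> t))) (r t * cos (\<theta> t))"
    "ydd t = - deriv (\<lambda>v. V (r t * cos (\<theta> t)) v) (r t * sin (\<theta> t))"
    using eq_x eq_y polar t by simp_all
  note hamilton = polar_hamilton_equations[OF V_def I_open \<theta>_in_t r_pos_t f''
      xd_deriv[rule_format, OF t] yd_deriv[rule_format, OF t] r_deriv[rule_format, OF t]
      \<theta>_deriv[rule_format, OF t] vel[OF t] newton, folded pr_def p\<theta>_def momenta(2)[OF t]]
  have r': "(r has_real_derivative pr t) (at t)"
    and \<theta>': "(\<theta> has_real_derivative p\<theta> t / (r t)\<^sup>2) (at t)"
    using r_deriv \<theta>_deriv momenta r_pos_t t by auto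
  have "J_ode_residual f c1 (\<theta> t) = 0"
    using f_ode \<theta>_in_t unfolding J_ode_residual_def by blast
  then have "((\<lambda>s. J_polar f c1 (r s) (\<theta> s) (pr s) (p\<theta> s)) has_real_derivative 0) (at t)"
    using J_polar_has_derivative[OF f' f'' r' \<theta>' hamilton r_pos_t, of c1] by simp
  then show "((\<lambda>s. J_polar f c1 (r s) (\<theta> s) (rd s) ((r s)^2 * \<theta>d s)) has_real_derivative 0) (at t)"
    using T_open t by (rule has_field_derivative_transform_within_open) (simp add: momenta)
qed

end
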